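(* For every connected graph $G$ with at least two vertices, there is a simple protocol solving multiparty equality on $G$ in the local broadcast model whose per-bit cost is at most $2\cdot\frac{\gamma(G)}{\gamma_f(G)}\cdot \mathrm{opt}(G)$.
   Context: Multiparty equality in the local broadcast model: every vertex $v$ of a connected graph $G$ receives an input $\lambda(v)\in\{0,1\}^k$. Vertices communicate by broadcasting messages, received by all neighbours and counted once. Protocols are deterministic and static: which vertices send and message lengths depend only on $G$ and $k$, contents may depend on inputs. At the end every vertex accepts or rejects; the protocol solves the problem if all vertices accept when all inputs are equal and at least one rejects when two inputs differ. Total cost = sum of the numbers of bits broadcast; $\mathrm{opt}(G,k)$ is the minimum total cost of a solving protocol and $\mathrm{opt}(G)=\lim_{k\to\infty}\mathrm{opt}(G,k)/k$. A simple protocol: each vertex of a fixed set $S$ broadcasts its whole input, others are silent, and each vertex accepts iff all inputs it received equal its own; its per-bit cost is $|S|$. $\gamma(G)$ is the domination number and $\gamma_f(G)$ the fractional domination number (minimum of $\sum_v x(v)$ over $x\ge0$ with $\sum_{u\in N[v]}x(u)\ge1$ for all $v$, $N[v]$ the closed neighbourhood). *)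

theory Defs
  imports Complex_Main
begin

definition graph :: "'v set \<Rightarrow> ('v \<Rightarrow> 'v \<Rightarrow> bool) \<Rightarrow> bool" where
  "graph V E \<longleftrightarrow> finite V \<and> (\<forall>u v. E u v \<longrightarrow> u \<in> V \<and> v \<in> V)
     \<and> (\<forall>u v. E u v \<longrightarrow> E v u) \<and> (\<forall>v. \<not> E v v)"

definition connected_graph :: "'v set \<Rightarrow> ('v \<Rightarrow> 'v \<Rightarrow> bool) \<Rightarrow> bool" where
  "connected_graph V E \<longleftrightarrow> (\<forall>u\<in>V. \<forall>v\<in>V. E\<^sup>*\<^sup>* u v)"

definition cnbhd :: "'v set \<Rightarrow> ('v \<Rightarrow> 'v \<Rightarrow> bool) \<Rightarrow> 'v \<Rightarrow> 'v set" where
  "cnbhd V E v = {u \<in> V. u = v \<or> E u v}"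

definition dominating :: "'v set \<Rightarrow> ('v \<Rightarrow> 'v \<Rightarrow> bool) \<Rightarrow> 'v set \<Rightarrow> bool" where
  "dominating V E D \<longleftrightarrow> D \<subseteq> V \<and> (\<forall>v\<in>V. D \<inter> cnbhd V E v \<noteq> {})"

definition domination_number :: "'v set \<Rightarrow> ('v \<Rightarrow> 'v \<Rightarrow> bool) \<Rightarrow> nat" where
  "domination_number V E = Min {card D | D. dominating V E D}"

definition frac_domination_number :: "'v set \<Rightarrow> ('v \<Rightarrow> 'v \<Rightarrow> bool) \<Rightarrow> real" where
  "frac_domination_number V E = Inf {(\<Sum>v\<in>V. x v) | x :: 'v \<Rightarrow> real.
      (\<forall>v\<in>V. 0 \<le> x v) \<and> (\<forall>v\<in>V. (\<Sum>u\<in>cnbhd V E v. x u) \<ge> 1)}"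

text \<open>A view is the sequence of all broadcasts so far, where a broadcast is visible
  (Some m) to vertex u iff its sender lies in N[u], otherwise None.
  A step (v, l, f): vertex v broadcasts l bits, the content computed by f from v's input and
  v's current view; the output of f is forced to length l by padding/truncation (fit).
  Senders and lengths are fixed (static protocol); contents depend on inputs.
  A protocol is a list of steps together with a decision function:
  vertex u accepts iff dec u (input of u) (final view of u).\<close>

type_synonym view = "bool list option list"
type_synonym 'v step = "'v \<times> nat \<times> (bool list \<Rightarrow> view \<Rightarrow> bool list)"
type_synonym 'v protocol = "'v step list \<times> ('v \<Rightarrow> bool list \<Rightarrow> view \<Rightarrow> bool)"

definition fit :: "nat \<Rightarrow> bool list \<Rightarrow> bool list" where
  "fit l w = take l (w @ replicate l False)"

definition view_of :: "('v \<Rightarrow> 'v \<Rightarrow> bool) \<Rightarrow> 'v list \<Rightarrow> bool list list \<Rightarrow> 'v \<Rightarrow> view" where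
  "view_of E ss ms u = map (\<lambda>(s, m). if s = u \<or> E s u then Some m else None) (zip ss ms)"

definition run_step :: "('v \<Rightarrow> 'v \<Rightarrow> bool) \<Rightarrow> ('v \<Rightarrow> bool list)
    \<Rightarrow> 'v list \<times> bool list list \<Rightarrow> 'v step \<Rightarrow> 'v list \<times> bool list list" where
  "run_step E lam st stp = (case st of (ss, ms) \<Rightarrow> (case stp of (v, l, f) \<Rightarrow>
      (ss @ [v], ms @ [fit l (f (lam v) (view_of E ss ms v))])))"

definition exec :: "('v \<Rightarrow> 'v \<Rightarrow> bool) \<Rightarrow> 'v step list \<Rightarrow> ('v \<Rightarrow> bool list)
    \<Rightarrow> 'v list \<times> bool list list" where
  "exec E steps lam = foldl (run_step E lam) ([], []) steps"

definition accepts :: "('v \<Rightarrow> 'v \<Rightarrow> bool) \<Rightarrow> 'v protocol \<Rightarrow> ('v \<Rightarrow> bool list) \<Rightarrow> 'v \<Rightarrow> bool" where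
  "accepts E P lam u = (case exec E (fst P) lam of (ss, ms) \<Rightarrow> snd P u (lam u) (view_of E ss ms u))"

definition cost :: "'v protocol \<Rightarrow> nat" where
  "cost P = sum_list (map (\<lambda>(v, l, f). l) (fst P))"

definition solves :: "'v set \<Rightarrow> ('v \<Rightarrow> 'v \<Rightarrow> bool) \<Rightarrow> nat \<Rightarrow> 'v protocol \<Rightarrow> bool" where
  "solves V E k P \<longleftrightarrow> (\<forall>(v, l, f) \<in> set (fst P). v \<in> V) \<and>
     (\<forall>lam. (\<forall>v\<in>V. length (lam v) = k) \<longrightarrow>
        ((\<forall>u\<in>V. \<forall>v\<in>V. lam u = lam v) \<longrightarrow> (\<forall>v\<in>V. accepts E P lam v)) \<and>
        ((\<exists>u\<in>V. \<exists>v\<in>V. lam u \<noteq> lam v) \<longrightarrow> (\<exists>v\<in>V. \<not> accepts E P lam v)))"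

definition opt :: "'v set \<Rightarrow> ('v \<Rightarrow> 'v \<Rightarrow> bool) \<Rightarrow> nat \<Rightarrow> nat" where
  "opt V E k = Inf {cost P | P. solves V E k P}"

definition opt_rate :: "'v set \<Rightarrow> ('v \<Rightarrow> 'v \<Rightarrow> bool) \<Rightarrow> real" where
  "opt_rate V E = lim (\<lambda>k. real (opt V E k) / real k)"

definition simple_protocol :: "'v list \<Rightarrow> nat \<Rightarrow> 'v protocol" where
  "simple_protocol ss k =
     (map (\<lambda>v. (v, k, (\<lambda>x vw. x))) ss,
      (\<lambda>u x vw. \<forall>m\<in>set vw. m = None \<or> m = Some x))"

end

theory Submission
  imports Defs
begin

text \<open>Upper bound: the simple protocol for S is correct as soon as the closed neighbourhoods of
  S link V, i.e. every function constant on each of them is constant on V. Starting from one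
  vertex of a dominating set D, the linked region is grown along an edge leaving it: the vertex of
  D dominating the far endpoint joins, together with the near endpoint as a connector. This yields
  such an S with |S| \<le> 2|D|.
  Lower bound: in a protocol for k-bit inputs every vertex v hears at least k bits from N[v];
  otherwise two constant inputs x \<noteq> y produce the same messages there, and the hybrid input
  (x at v, y elsewhere) is accepted everywhere. Hence the bits per input bit sent by the vertices
  form a fractional dominating set, so opt(G,k) \<ge> \<gamma>_f k and opt(G) \<ge> \<gamma>_f. The limit opt(G)
  exists by Fekete's lemma, as concatenating protocols makes opt(G,k) subadditive.\<close>

lemma exec_Nil [simp]: "exec E [] lam = ([], [])"
  by (simp add: exec_def)

lemma exec_snoc_run_step: "exec E (st @ [s]) lam = run_step E lam (exec E st lam) s"
  by (simp add: exec_def)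

lemma fst_exec: "fst (exec E st lam) = map fst st"
  by (induction st rule: rev_induct)
     (auto simp: exec_snoc_run_step run_step_def split: prod.splits)

lemma exec_snoc: "exec E (st @ [(w, l, f)]) lam =
   (map fst st @ [w],
    snd (exec E st lam) @ [fit l (f (lam w) (view_of E (map fst st) (snd (exec E st lam)) w))])"
  using fst_exec[of E st lam]
  by (cases "exec E st lam") (simp add: exec_snoc_run_step run_step_def)

lemma length_fit [simp]: "length (fit l w) = l"
  by (simp add: fit_def)

lemma map_length_exec: "map length (snd (exec E st lam)) = map (\<lambda>(v, l, f). l) st"
  by (induction st rule: rev_induct) (auto simp: exec_snoc)

lemma length_exec [simp]: "length (snd (exec E st lam)) = length st"
  using arg_cong[OF map_length_exec[of E st lam], of length] by simp

lemma length_view_of [simp]: "length (view_of E ss ms u) = min (length ss) (length ms)"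
  by (simp add: view_of_def)

lemma nth_view_of: "j < length ss \<Longrightarrow> j < length ms \<Longrightarrow>
   view_of E ss ms u ! j = (if ss ! j = u \<or> E (ss ! j) u then Some (ms ! j) else None)"
  by (simp add: view_of_def)

lemma view_of_cong:
  assumes "length ms = length ss" "length ms' = length ss"
    and "\<And>j. j < length ss \<Longrightarrow> ss ! j = u \<or> E (ss ! j) u \<Longrightarrow> ms ! j = ms' ! j"
  shows "view_of E ss ms u = view_of E ss ms' u"
  by (rule nth_equalityI) (use assms in \<open>auto simp: nth_view_of\<close>)

lemma view_of_append: "length ss1 = length ms1 \<Longrightarrow>
   view_of E (ss1 @ ss2) (ms1 @ ms2) u = view_of E ss1 ms1 u @ view_of E ss2 ms2 u"
  by (simp add: view_of_def)

lemma accepts_iff: "accepts E P lam u \<longleftrightarrow>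
   snd P u (lam u) (view_of E (map fst (fst P)) (snd (exec E (fst P) lam)) u)"
  using fst_exec[of E "fst P" lam] by (cases "exec E (fst P) lam") (simp add: accepts_def)

lemma solves_senders: "solves V E k P \<Longrightarrow> set (map fst (fst P)) \<subseteq> V"
  unfolding solves_def by auto

lemma solves_accepts:
  "\<lbrakk>solves V E k P; \<forall>v\<in>V. length (lam v) = k; \<forall>u\<in>V. \<forall>v\<in>V. lam u = lam v; w \<in> V\<rbrakk>
   \<Longrightarrow> accepts E P lam w"
  unfolding solves_def by blast

lemma solves_rejects:
  "\<lbrakk>solves V E k P; \<forall>v\<in>V. length (lam v) = k; a \<in> V; b \<in> V; lam a \<noteq> lam b\<rbrakk>
   \<Longrightarrow> \<exists>w\<in>V. \<not> accepts E P lam w"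
  unfolding solves_def by blast

section \<open>Lower bound by fooling inputs\<close>

lemma exec_hybrid:
  assumes "\<forall>j<length st. fst (st ! j) = v \<or> E (fst (st ! j)) v \<longrightarrow>
             snd (exec E st (\<lambda>_. x)) ! j = snd (exec E st (\<lambda>_. y)) ! j"
  shows "snd (exec E st (\<lambda>u. if u = v then x else y)) =
    map (\<lambda>j. if fst (st ! j) = v then snd (exec E st (\<lambda>_. x)) ! j
             else snd (exec E st (\<lambda>_. y)) ! j) [0..<length st]"
  using assms
proof (induction st rule: rev_induct)
  case Nil
  then show ?case by simp
next
  case (snoc s st)
  obtain w l f where s: "s = (w, l, f)" by (cases s)
  define h where "h = (\<lambda>u. if u = v then x else y)"
  define mx where "mx = snd (exec E st (\<lambda>_. x))"
  define my where "my = snd (exec E st (\<lambda>_. y))"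
  define mh where "mh = snd (exec E st h)"
  have agree: "\<forall>j<length st. fst (st ! j) = v \<or> E (fst (st ! j)) v \<longrightarrow> mx ! j = my ! j"
  proof (intro allI impI)
    fix j assume "j < length st" "fst (st ! j) = v \<or> E (fst (st ! j)) v"
    then show "mx ! j = my ! j"
      using snoc.prems[rule_format, of j] by (simp add: s exec_snoc nth_append mx_def my_def)
  qed
  then have mh: "mh = map (\<lambda>j. if fst (st ! j) = v then mx ! j else my ! j) [0..<length st]"
    using snoc.IH by (simp add: mh_def mx_def my_def h_def)
  have lengths: "length mx = length st" "length my = length st"
    by (simp_all add: mx_def my_def)
  have "view_of E (map fst st) mh w = view_of E (map fst st) (if w = v then mx else my) w"
    by (rule view_of_cong) (use agree lengths in \<open>auto simp: mh\<close>)
  then have "fit l (f (h w) (view_of E (map fst st) mh w)) =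
      (if w = v then fit l (f x (view_of E (map fst st) mx w))
       else fit l (f y (view_of E (map fst st) my w)))"
    by (simp add: h_def)
  moreover have "snd (exec E (st @ [s]) h) = mh @ [fit l (f (h w) (view_of E (map fst st) mh w))]"
    "snd (exec E (st @ [s]) (\<lambda>_. x)) = mx @ [fit l (f x (view_of E (map fst st) mx w))]"
    "snd (exec E (st @ [s]) (\<lambda>_. y)) = my @ [fit l (f y (view_of E (map fst st) my w))]"
    by (simp_all add: s exec_snoc mh_def mx_def my_def)
  ultimately show ?case
    unfolding h_def[symmetric]
    by (intro nth_equalityI) (auto simp: s mh lengths nth_append)
qed

lemma solves_separates_constant_inputs:
  assumes sol: "solves V E k P" and v: "v \<in> V" and u: "u \<in> V" "u \<noteq> v"
    and xy: "length x = k" "length y = k" "x \<noteq> y"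
  shows "\<exists>j<length (fst P). fst (fst P ! j) \<in> cnbhd V E v \<and>
           snd (exec E (fst P) (\<lambda>_. x)) ! j \<noteq> snd (exec E (fst P) (\<lambda>_. y)) ! j"
proof (rule ccontr)
  define st where "st = fst P"
  define mx where "mx = snd (exec E st (\<lambda>_. x))"
  define my where "my = snd (exec E st (\<lambda>_. y))"
  define h where "h = (\<lambda>w. if w = v then x else y)"
  assume "\<not> ?thesis"
  moreover have "fst (st ! j) \<in> V" if "j < length st" for j
    using solves_senders[OF sol] that by (auto simp: st_def)
  ultimately have agree: "\<forall>j<length st. fst (st ! j) = v \<or> E (fst (st ! j)) v \<longrightarrow> mx ! j = my ! j"
    by (auto simp: cnbhd_def st_def mx_def my_def)
  have mh: "snd (exec E st h) = map (\<lambda>j. if fst (st ! j) = v then mx ! j else my ! j) [0..<length st]"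
    using exec_hybrid[of st v E x y] agree by (simp add: h_def mx_def my_def)
  have "\<exists>w\<in>V. \<not> accepts E P h w"
    by (rule solves_rejects[OF sol _ v u(1)]) (use xy u(2) in \<open>auto simp: h_def\<close>)
  then obtain w where w: "w \<in> V" "\<not> accepts E P h w" by blast
  show False
  proof (cases "w = v")
    case True
    have "view_of E (map fst st) (snd (exec E st h)) v = view_of E (map fst st) mx v"
      by (rule view_of_cong) (use agree in \<open>auto simp: mh mx_def my_def\<close>)
    then have "accepts E P h w = accepts E P (\<lambda>_. x) w"
      by (simp add: accepts_iff True st_def[symmetric] mx_def h_def)
    then show False using w solves_accepts[OF sol, of "\<lambda>_. x"] xy by simp
  next
    case False
    have "view_of E (map fst st) (snd (exec E st h)) w = view_of E (map fst st) my w"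
      by (rule view_of_cong) (use agree in \<open>auto simp: mh mx_def my_def\<close>)
    then have "accepts E P h w = accepts E P (\<lambda>_. y) w"
      using False by (simp add: accepts_iff st_def[symmetric] my_def h_def)
    then show False using w solves_accepts[OF sol, of "\<lambda>_. y"] xy by simp
  qed
qed

definition bits_from :: "'v step list \<Rightarrow> 'v set \<Rightarrow> nat" where
  "bits_from st A = sum_list (map (\<lambda>(v, l, f). if v \<in> A then l else 0) st)"

definition msgs_from :: "'v set \<Rightarrow> 'v step list \<Rightarrow> bool list list \<Rightarrow> bool list list" where
  "msgs_from A st ms = map (\<lambda>j. if fst (st ! j) \<in> A then ms ! j else []) [0..<length st]"

lemma map_length_msgs_from: "map length (msgs_from A st (snd (exec E st lam))) =
   map (\<lambda>(v, l, f). if v \<in> A then l else 0) st"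
proof (rule nth_equalityI)
  fix j assume "j < length (map length (msgs_from A st (snd (exec E st lam))))"
  then have j: "j < length st" by (simp add: msgs_from_def)
  have "length (snd (exec E st lam) ! j) = fst (snd (st ! j))"
    using nth_map[of j "snd (exec E st lam)" length] j
    by (simp add: map_length_exec case_prod_beta)
  then show "map length (msgs_from A st (snd (exec E st lam))) ! j =
      map (\<lambda>(v, l, f). if v \<in> A then l else 0) st ! j"
    using j by (simp add: msgs_from_def case_prod_beta)
qed (simp add: msgs_from_def)

lemma length_concat_msgs_from:
  "length (concat (msgs_from A st (snd (exec E st lam)))) = bits_from st A"
  by (simp add: length_concat bits_from_def map_length_msgs_from flip: comp_def)

lemma concat_eq_concat_imp_eq:
  "map length xs = map length ys \<Longrightarrow> concat xs = concat ys \<Longrightarrow> xs = ys"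
proof (induction xs arbitrary: ys)
  case (Cons x xs)
  then obtain y ys' where "ys = y # ys'" by (cases ys) auto
  with Cons show ?case by simp
qed simp

lemma solves_nbhd_bits_ge:
  assumes sol: "solves V E k P" and v: "v \<in> V" and u: "u \<in> V" "u \<noteq> v"
  shows "k \<le> bits_from (fst P) (cnbhd V E v)"
proof -
  define st where "st = fst P"
  define L where "L = bits_from st (cnbhd V E v)"
  define heard where "heard = (\<lambda>x. concat (msgs_from (cnbhd V E v) st (snd (exec E st (\<lambda>_. x)))))"
  define inputs where "inputs = {x :: bool list. set x \<subseteq> UNIV \<and> length x = k}"
  have "inj_on heard inputs"
  proof (rule inj_onI, rule ccontr)
    fix x y assume "x \<in> inputs" "y \<in> inputs" and eq: "heard x = heard y" and "x \<noteq> y"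
    then obtain j where j: "j < length st" "fst (st ! j) \<in> cnbhd V E v"
        "snd (exec E st (\<lambda>_. x)) ! j \<noteq> snd (exec E st (\<lambda>_. y)) ! j"
      using solves_separates_constant_inputs[OF sol v u] by (auto simp: inputs_def st_def)
    have "msgs_from (cnbhd V E v) st (snd (exec E st (\<lambda>_. x))) =
        msgs_from (cnbhd V E v) st (snd (exec E st (\<lambda>_. y)))"
      using eq by (intro concat_eq_concat_imp_eq) (simp_all add: heard_def map_length_msgs_from)
    then have "msgs_from (cnbhd V E v) st (snd (exec E st (\<lambda>_. x))) ! j =
        msgs_from (cnbhd V E v) st (snd (exec E st (\<lambda>_. y))) ! j" by simp
    with j show False by (simp add: msgs_from_def)
  qed
  then have "card inputs \<le> card {w :: bool list. set w \<subseteq> UNIV \<and> length w = L}"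
    by (rule card_inj_on_le)
       (auto simp: heard_def L_def length_concat_msgs_from
        finite_lists_length_eq[OF finite_UNIV, simplified])
  then have "(2::nat) ^ k \<le> 2 ^ L"
    by (simp only: inputs_def card_lists_length_eq finite_UNIV card_UNIV_bool)
  then show ?thesis by (simp add: L_def st_def)
qed

lemma sum_bits_from_singletons:
  "finite A \<Longrightarrow> (\<Sum>u\<in>A. bits_from st {u}) = bits_from st A"
proof (induction st)
  case (Cons s st)
  then show ?case by (cases s) (simp add: bits_from_def sum.distrib)
qed (simp add: bits_from_def)

lemma bits_from_senders:
  "set (map fst st) \<subseteq> A \<Longrightarrow> bits_from st A = sum_list (map (\<lambda>(v, l, f). l) st)"
  unfolding bits_from_def by (induction st) auto

lemma frac_domination_number_le:
  assumes "\<forall>v\<in>V. 0 \<le> x v" and "\<forall>v\<in>V. 1 \<le> (\<Sum>u\<in>cnbhd V E v. x u)"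
  shows "frac_domination_number V E \<le> (\<Sum>v\<in>V. x v)"
  unfolding frac_domination_number_def
proof (rule cInf_lower)
  show "(\<Sum>v\<in>V. x v) \<in>
      {\<Sum>v\<in>V. x v |x. (\<forall>v\<in>V. 0 \<le> x v) \<and> (\<forall>v\<in>V. 1 \<le> sum x (cnbhd V E v))}"
    using assms by blast
  show "bdd_below
      {\<Sum>v\<in>V. x v |x. (\<forall>v\<in>V. (0::real) \<le> x v) \<and> (\<forall>v\<in>V. 1 \<le> sum x (cnbhd V E v))}"
    by (rule bdd_belowI[of _ 0]) (auto intro: sum_nonneg)
qed

lemma frac_domination_number_ge_1:
  assumes g: "graph V E" and ne: "V \<noteq> {}"
  shows "1 \<le> frac_domination_number V E"
proof -
  let ?F = "{\<Sum>v\<in>V. x v |x. (\<forall>v\<in>V. (0::real) \<le> x v) \<and> (\<forall>v\<in>V. 1 \<le> sum x (cnbhd V E v))}"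
  have "1 \<le> card (cnbhd V E v)" if "v \<in> V" for v
    using g that by (auto simp: graph_def cnbhd_def Suc_le_eq card_gt_0_iff)
  then have "?F \<noteq> {}"
    unfolding ex_in_conv[symmetric] mem_Collect_eq
    by (intro exI[of _ "\<Sum>v\<in>V. 1::real"] exI[of _ "\<lambda>_. 1::real"]) auto
  moreover have "1 \<le> r" if "r \<in> ?F" for r
  proof -
    obtain x where r: "r = (\<Sum>v\<in>V. x v)" and nonneg: "\<forall>v\<in>V. 0 \<le> x v"
      and cover: "\<forall>v\<in>V. 1 \<le> sum x (cnbhd V E v)" using \<open>r \<in> ?F\<close> by blast
    obtain v where v: "v \<in> V" using ne by blast
    have "sum x (cnbhd V E v) \<le> sum x V"
      using g nonneg by (intro sum_mono2) (auto simp: graph_def cnbhd_def)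
    then show "1 \<le> r" using cover v r by force
  qed
  ultimately show ?thesis unfolding frac_domination_number_def by (rule cInf_greatest)
qed

lemma frac_domination_number_mult_le_cost:
  assumes g: "graph V E" and two: "card V \<ge> 2" and sol: "solves V E k P" and k: "k > 0"
  shows "frac_domination_number V E * k \<le> cost P"
proof -
  define st where "st = fst P"
  define x where "x = (\<lambda>u. real (bits_from st {u}) / k)"
  have fin: "finite V" using g by (simp add: graph_def)
  have "frac_domination_number V E \<le> (\<Sum>v\<in>V. x v)"
  proof (rule frac_domination_number_le)
    show "\<forall>v\<in>V. 0 \<le> x v" by (simp add: x_def)
    show "\<forall>v\<in>V. 1 \<le> (\<Sum>u\<in>cnbhd V E v. x u)"
    proof
      fix v assume v: "v \<in> V"
      obtain u where u: "u \<in> V" "u \<noteq> v"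
        using two v by (metis card_le_Suc0_iff_eq not_less_eq_eq numeral_2_eq_2 fin)
      have "finite (cnbhd V E v)" using fin by (simp add: cnbhd_def)
      then have "(\<Sum>u\<in>cnbhd V E v. x u) = bits_from st (cnbhd V E v) / k"
        by (simp add: x_def sum_bits_from_singletons flip: sum_divide_distrib of_nat_sum)
      then show "1 \<le> (\<Sum>u\<in>cnbhd V E v. x u)"
        using solves_nbhd_bits_ge[OF sol v u] k by (simp add: st_def)
    qed
  qed
  also have "(\<Sum>v\<in>V. x v) = cost P / k"
    using fin solves_senders[OF sol]
    by (simp add: x_def cost_def st_def sum_bits_from_singletons bits_from_senders
        flip: sum_divide_distrib of_nat_sum)
  finally show ?thesis using k by (simp add: field_simps)
qed

section \<open>Simple protocols from linking sets\<close>

lemma exec_simple_protocol: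
  "snd (exec E (map (\<lambda>v. (v, k, \<lambda>x vw. x)) ss) lam) = map (\<lambda>v. fit k (lam v)) ss"
  by (induction ss rule: rev_induct) (simp_all add: exec_snoc)

lemma accepts_simple_protocol: "accepts E (simple_protocol ss k) lam u \<longleftrightarrow>
   (\<forall>s\<in>set ss. s = u \<or> E s u \<longrightarrow> fit k (lam s) = lam u)"
proof -
  have "view_of E ss (map (\<lambda>v. fit k (lam v)) ss) u =
        map (\<lambda>s. if s = u \<or> E s u then Some (fit k (lam s)) else None) ss"
    by (induction ss) (auto simp: view_of_def)
  then show ?thesis
    by (auto simp: accepts_iff exec_simple_protocol simple_protocol_def comp_def)
qed

definition constant_on_nbhds ::
    "'v set \<Rightarrow> ('v \<Rightarrow> 'v \<Rightarrow> bool) \<Rightarrow> 'v set \<Rightarrow> ('v \<Rightarrow> bool) \<Rightarrow> bool" where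
  "constant_on_nbhds V E S f \<longleftrightarrow> (\<forall>s\<in>S. \<forall>u\<in>V. s = u \<or> E s u \<longrightarrow> f u = f s)"

definition nbhds_link :: "'v set \<Rightarrow> ('v \<Rightarrow> 'v \<Rightarrow> bool) \<Rightarrow> 'v set \<Rightarrow> 'v set \<Rightarrow> bool" where
  "nbhds_link V E S W \<longleftrightarrow>
     (\<forall>f. constant_on_nbhds V E S f \<longrightarrow> (\<forall>a\<in>W. \<forall>b\<in>W. f a = f b))"

lemma simple_protocol_solves:
  assumes ssV: "set ss \<subseteq> V" and link: "nbhds_link V E (set ss) V"
  shows "solves V E k (simple_protocol ss k)"
  unfolding solves_def
proof (intro conjI allI impI)
  show "\<forall>(v, l, f)\<in>set (fst (simple_protocol ss k)). v \<in> V"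
    using ssV by (auto simp: simple_protocol_def)
next
  fix lam :: "'a \<Rightarrow> bool list"
  assume "\<forall>v\<in>V. length (lam v) = k"
  then have fit_input: "fit k (lam s) = lam s" if "s \<in> set ss" for s
    using ssV that by (auto simp: fit_def)
  show "\<forall>v\<in>V. accepts E (simple_protocol ss k) lam v" if eq: "\<forall>u\<in>V. \<forall>v\<in>V. lam u = lam v"
    unfolding accepts_simple_protocol by (metis eq fit_input ssV subsetD)
  show "\<exists>v\<in>V. \<not> accepts E (simple_protocol ss k) lam v" if differ: "\<exists>u\<in>V. \<exists>v\<in>V. lam u \<noteq> lam v"
  proof (rule ccontr)
    obtain a b where ab: "a \<in> V" "b \<in> V" "lam a \<noteq> lam b" using differ by blast
    assume "\<not> ?thesis"
    then have "lam s = lam u" if "s \<in> set ss" "u \<in> V" "s = u \<or> E s u" for s u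
      using that fit_input by (auto simp: accepts_simple_protocol)
    then have "constant_on_nbhds V E (set ss) (\<lambda>w. lam w = lam a)"
      by (auto simp: constant_on_nbhds_def)
    then have "(lam a = lam a) = (lam b = lam a)" using link ab unfolding nbhds_link_def by blast
    then show False using ab(3) by simp
  qed
qed

section \<open>Linking sets from dominating sets\<close>

definition covered :: "'v set \<Rightarrow> ('v \<Rightarrow> 'v \<Rightarrow> bool) \<Rightarrow> 'v set \<Rightarrow> 'v set" where
  "covered V E C = {u\<in>V. \<exists>c\<in>C. c = u \<or> E c u}"

lemma exists_crossing_edge:
  "E\<^sup>*\<^sup>* a b \<Longrightarrow> a \<in> W \<Longrightarrow> b \<notin> W \<Longrightarrow> \<exists>p q. E p q \<and> p \<in> W \<and> q \<notin> W"
  by (induction rule: rtranclp_induct) auto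

lemma covered_extend:
  assumes g: "graph V E" and conn: "connected_graph V E" and dom: "dominating V E D"
    and c: "c \<in> C" "C \<subseteq> V" and uncovered: "covered V E C \<noteq> V"
  obtains p d where "p \<in> covered V E C" "d \<in> D" "d \<notin> C"
    "\<And>f. constant_on_nbhds V E (insert p D) f \<Longrightarrow> \<forall>u\<in>covered V E C. f u = f p \<Longrightarrow>
       \<forall>u\<in>covered V E (insert d C). f u = f p"
proof -
  have "covered V E C \<subseteq> V" by (auto simp: covered_def)
  then obtain b where b: "b \<in> V" "b \<notin> covered V E C" using uncovered by blast
  have "c \<in> covered V E C" using c by (auto simp: covered_def)
  moreover have "E\<^sup>*\<^sup>* c b" using conn c b(1) by (auto simp: connected_graph_def)
  ultimately have "\<exists>p q. E p q \<and> p \<in> covered V E C \<and> q \<notin> covered V E C"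
    using b(2) by (intro exists_crossing_edge)
  then obtain p q where pq: "E p q" "p \<in> covered V E C" "q \<notin> covered V E C" by blast
  have qV: "q \<in> V" using pq(1) g by (auto simp: graph_def)
  obtain d where d: "d \<in> D" "d = q \<or> E d q"
    using dom qV unfolding dominating_def cnbhd_def by blast
  have dC: "d \<notin> C" using pq(3) qV d(2) by (auto simp: covered_def)
  have extend: "\<forall>u\<in>covered V E (insert d C). f u = f p"
    if f: "constant_on_nbhds V E (insert p D) f" and old: "\<forall>u\<in>covered V E C. f u = f p" for f
  proof
    fix u assume u: "u \<in> covered V E (insert d C)"
    have "f q = f p" "f q = f d"
      using f qV pq(1) d unfolding constant_on_nbhds_def by blast+
    moreover have "f u = f d" if "d = u \<or> E d u"
      using f d(1) u that unfolding constant_on_nbhds_def covered_def by blast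
    moreover have "u \<in> covered V E C" if "\<not> (d = u \<or> E d u)"
      using u that unfolding covered_def by blast
    ultimately show "f u = f p" using old by metis
  qed
  show thesis by (rule that[OF pq(2) d(1) dC extend])
qed

lemma linked_cover_grows:
  assumes g: "graph V E" and conn: "connected_graph V E" and dom: "dominating V E D"
    and d0: "d0 \<in> D"
  shows "\<exists>C A. C \<subseteq> D \<and> A \<subseteq> V \<and> card A < card C \<and>
    nbhds_link V E (D \<union> A) (covered V E C) \<and> (covered V E C = V \<or> n < card C)"
proof -
  have DV: "D \<subseteq> V" and fin: "finite D"
    using dom g finite_subset by (auto simp: dominating_def graph_def)
  show ?thesis
  proof (induction n)
    case 0
    have "nbhds_link V E (D \<union> {}) (covered V E {d0})"
      using d0 by (auto simp: nbhds_link_def constant_on_nbhds_def covered_def)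
    then show ?case using d0 by (intro exI[of _ "{d0}"] exI[of _ "{}"]) auto
  next
    case (Suc n)
    then obtain C A where CA: "C \<subseteq> D" "A \<subseteq> V" "card A < card C"
      and link: "nbhds_link V E (D \<union> A) (covered V E C)"
      and stop: "covered V E C = V \<or> n < card C" by blast
    show ?case
    proof (cases "covered V E C = V \<or> Suc n < card C")
      case True
      then show ?thesis using CA link by blast
    next
      case False
      then have unc: "covered V E C \<noteq> V" and card_C: "card C = Suc n" using stop by auto
      then obtain c where c: "c \<in> C" by (metis card.empty ex_in_conv nat.distinct(1))
      have "C \<subseteq> V" using CA(1) DV by blast
      obtain p d where p: "p \<in> covered V E C" and d: "d \<in> D" "d \<notin> C"
        and step: "\<And>f. constant_on_nbhds V E (insert p D) f \<Longrightarrow> \<forall>u\<in>covered V E C. f u = f p \<Longrightarrow>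
                        \<forall>u\<in>covered V E (insert d C). f u = f p"
        by (rule covered_extend[OF g conn dom c \<open>C \<subseteq> V\<close> unc]) (rule that)
      have finC: "finite C" using CA(1) fin by (rule finite_subset)
      have finA: "finite A" using CA(2) g by (auto simp: graph_def intro: finite_subset)
      have "nbhds_link V E (D \<union> insert p A) (covered V E (insert d C))"
        unfolding nbhds_link_def
      proof (intro allI impI)
        fix f assume f: "constant_on_nbhds V E (D \<union> insert p A) f"
        have "constant_on_nbhds V E (D \<union> A) f" and f': "constant_on_nbhds V E (insert p D) f"
          using f by (auto simp: constant_on_nbhds_def)
        then have "\<forall>u\<in>covered V E C. f u = f p" using link p by (auto simp: nbhds_link_def)
        then have "\<forall>u\<in>covered V E (insert d C). f u = f p" by (rule step[OF f'])
        then show "\<forall>a\<in>covered V E (insert d C). \<forall>b\<in>covered V E (insert d C). f a = f b" by simp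
      qed
      moreover have "card (insert p A) < card (insert d C)"
        using CA(3) d(2) finA finC by (simp add: card_insert_if)
      moreover have "card (insert d C) = Suc (Suc n)" using card_C d(2) finC by simp
      moreover have "insert p A \<subseteq> V" "insert d C \<subseteq> D"
        using p CA(1,2) d(1) by (auto simp: covered_def)
      ultimately show ?thesis by (intro exI[of _ "insert d C"] exI[of _ "insert p A"]) simp
    qed
  qed
qed

lemma nbhds_link_superset_of_dominating:
  assumes g: "graph V E" and conn: "connected_graph V E" and dom: "dominating V E D"
    and ne: "V \<noteq> {}"
  shows "\<exists>S. D \<subseteq> S \<and> S \<subseteq> V \<and> nbhds_link V E S V \<and> card S \<le> 2 * card D"
proof -
  have DV: "D \<subseteq> V" and fin: "finite D"
    using dom g finite_subset by (auto simp: dominating_def graph_def)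
  obtain d0 where d0: "d0 \<in> D" using dom ne unfolding dominating_def by blast
  obtain C A where CA: "C \<subseteq> D" "A \<subseteq> V" "card A < card C"
    and link: "nbhds_link V E (D \<union> A) (covered V E C)"
    and stop: "covered V E C = V \<or> card D < card C"
    using linked_cover_grows[OF g conn dom d0, of "card D"] by blast
  have "card C \<le> card D" using CA(1) fin by (rule card_mono[rotated])
  then have "nbhds_link V E (D \<union> A) V" using stop link by simp
  moreover have "card (D \<union> A) \<le> 2 * card D"
    using card_Un_le[of D A] CA(3) \<open>card C \<le> card D\<close> by simp
  ultimately show ?thesis using DV CA(2) by blast
qed

lemma domination_number_attained:
  assumes "graph V E"
  obtains D where "dominating V E D" "card D = domination_number V E"
proof -
  have fin: "finite V" using assms by (simp add: graph_def)
  have "{card D | D. dominating V E D} \<subseteq> {..card V}"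
    using fin by (auto simp: dominating_def card_mono)
  moreover have "dominating V E V" by (auto simp: dominating_def cnbhd_def)
  ultimately have "Min {card D | D. dominating V E D} \<in> {card D | D. dominating V E D}"
    by (intro Min_in) (auto intro: finite_subset)
  then show thesis using that by (auto simp: domination_number_def)
qed

section \<open>Concatenation of protocols\<close>

definition prefix_steps :: "nat \<Rightarrow> 'v step list \<Rightarrow> 'v step list" where
  "prefix_steps k st = map (\<lambda>(v, l, f). (v, l, \<lambda>x vw. f (take k x) vw)) st"

definition suffix_steps :: "nat \<Rightarrow> nat \<Rightarrow> 'v step list \<Rightarrow> 'v step list" where
  "suffix_steps k n st = map (\<lambda>(v, l, f). (v, l, \<lambda>x vw. f (drop k x) (drop n vw))) st"

definition concat_protocol :: "nat \<Rightarrow> 'v protocol \<Rightarrow> 'v protocol \<Rightarrow> 'v protocol" where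
  "concat_protocol k P1 P2 =
     (prefix_steps k (fst P1) @ suffix_steps k (length (fst P1)) (fst P2),
      \<lambda>u x vw. snd P1 u (take k x) (take (length (fst P1)) vw) \<and>
               snd P2 u (drop k x) (drop (length (fst P1)) vw))"

lemma exec_prefix_steps:
  "snd (exec E (prefix_steps k st) lam) = snd (exec E st (\<lambda>v. take k (lam v)))"
proof (induction st rule: rev_induct)
  case (snoc s st)
  then show ?case
    by (cases s) (simp add: prefix_steps_def exec_snoc comp_def case_prod_beta)
qed (simp add: prefix_steps_def)

lemma length_prefix_steps [simp]: "length (prefix_steps k st) = length st"
  by (simp add: prefix_steps_def)

lemma exec_suffix_steps: "n = length st0 \<Longrightarrow>
  snd (exec E (st0 @ suffix_steps k n st) lam) =
    snd (exec E st0 lam) @ snd (exec E st (\<lambda>v. drop k (lam v)))"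
proof (induction st rule: rev_induct)
  case (snoc s st)
  obtain w l f where s: "s = (w, l, f)" by (cases s)
  have "drop n (view_of E (map fst (st0 @ suffix_steps k n st))
                  (snd (exec E (st0 @ suffix_steps k n st) lam)) w)
      = view_of E (map fst st) (snd (exec E st (\<lambda>v. drop k (lam v)))) w"
    using snoc by (simp add: suffix_steps_def view_of_append comp_def case_prod_beta)
  then show ?case
    using snoc by (simp add: s suffix_steps_def exec_snoc flip: append_assoc)
qed (simp add: suffix_steps_def)

lemma accepts_concat_protocol: "accepts E (concat_protocol k P1 P2) lam u \<longleftrightarrow>
   accepts E P1 (\<lambda>v. take k (lam v)) u \<and> accepts E P2 (\<lambda>v. drop k (lam v)) u"
proof -
  have "snd (exec E (fst (concat_protocol k P1 P2)) lam) =
     snd (exec E (fst P1) (\<lambda>v. take k (lam v))) @ snd (exec E (fst P2) (\<lambda>v. drop k (lam v)))"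
    using exec_suffix_steps[of "length (fst P1)" "prefix_steps k (fst P1)"]
    by (simp add: concat_protocol_def exec_prefix_steps)
  moreover have "map fst (fst (concat_protocol k P1 P2)) = map fst (fst P1) @ map fst (fst P2)"
    by (simp add: concat_protocol_def prefix_steps_def suffix_steps_def comp_def case_prod_beta)
  ultimately show ?thesis
    by (simp add: accepts_iff view_of_append concat_protocol_def)
qed

lemma cost_concat_protocol: "cost (concat_protocol k P1 P2) = cost P1 + cost P2"
  by (simp add: cost_def concat_protocol_def prefix_steps_def suffix_steps_def comp_def split_def)

lemma solves_concat_protocol:
  assumes s1: "solves V E k1 P1" and s2: "solves V E k2 P2"
  shows "solves V E (k1 + k2) (concat_protocol k1 P1 P2)"
  unfolding solves_def
proof (intro conjI allI impI)
  show "\<forall>(v, l, f)\<in>set (fst (concat_protocol k1 P1 P2)). v \<in> V"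
    using solves_senders[OF s1] solves_senders[OF s2]
    by (auto simp: concat_protocol_def prefix_steps_def suffix_steps_def)
next
  fix lam :: "'a \<Rightarrow> bool list"
  assume len: "\<forall>v\<in>V. length (lam v) = k1 + k2"
  then have len1: "\<forall>v\<in>V. length (take k1 (lam v)) = k1"
    and len2: "\<forall>v\<in>V. length (drop k1 (lam v)) = k2" by simp_all
  show "\<forall>v\<in>V. accepts E (concat_protocol k1 P1 P2) lam v" if eq: "\<forall>u\<in>V. \<forall>v\<in>V. lam u = lam v"
  proof -
    have "lam u = lam v" if "u \<in> V" "v \<in> V" for u v using eq that by blast
    then have "\<forall>u\<in>V. \<forall>v\<in>V. take k1 (lam u) = take k1 (lam v)"
      and "\<forall>u\<in>V. \<forall>v\<in>V. drop k1 (lam u) = drop k1 (lam v)" by metis+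
    then have "accepts E P1 (\<lambda>v. take k1 (lam v)) w" "accepts E P2 (\<lambda>v. drop k1 (lam v)) w"
      if "w \<in> V" for w
      using solves_accepts[OF s1 len1] solves_accepts[OF s2 len2] that by blast+
    then show ?thesis by (simp add: accepts_concat_protocol)
  qed
  show "\<exists>v\<in>V. \<not> accepts E (concat_protocol k1 P1 P2) lam v" if differ: "\<exists>u\<in>V. \<exists>v\<in>V. lam u \<noteq> lam v"
  proof -
    obtain a b where ab: "a \<in> V" "b \<in> V" "lam a \<noteq> lam b" using differ by blast
    then have "take k1 (lam a) \<noteq> take k1 (lam b) \<or> drop k1 (lam a) \<noteq> drop k1 (lam b)"
      by (metis append_take_drop_id)
    then show ?thesis
      using solves_rejects[OF s1 len1 ab(1,2)] solves_rejects[OF s2 len2 ab(1,2)]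
      by (auto simp: accepts_concat_protocol)
  qed
qed

section \<open>The optimal rate\<close>

lemma opt_le_cost: "solves V E k P \<Longrightarrow> opt V E k \<le> cost P"
  unfolding opt_def by (rule cInf_lower) (blast, rule bdd_belowI[of _ 0], simp)

lemma opt_attained:
  assumes "\<forall>k. \<exists>P. solves V E k P"
  obtains Q where "solves V E k Q" "cost Q = opt V E k"
proof -
  have "opt V E k \<in> {cost P | P. solves V E k P}"
    unfolding opt_def using assms by (intro Inf_nat_def1) blast
  then show thesis using that by force
qed

lemma opt_add_le:
  assumes "\<forall>k. \<exists>P. solves V E k P"
  shows "opt V E (k1 + k2) \<le> opt V E k1 + opt V E k2"
proof -
  obtain P1 where P1: "solves V E k1 P1" "cost P1 = opt V E k1" by (rule opt_attained[OF assms])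
  obtain P2 where P2: "solves V E k2 P2" "cost P2 = opt V E k2" by (rule opt_attained[OF assms])
  have "opt V E (k1 + k2) \<le> cost (concat_protocol k1 P1 P2)"
    by (rule opt_le_cost[OF solves_concat_protocol[OF P1(1) P2(1)]])
  then show ?thesis by (simp add: cost_concat_protocol P1(2) P2(2))
qed

lemma subadditive_iterate:
  fixes a :: "nat \<Rightarrow> real"
  assumes sub: "\<And>m n. a (m + n) \<le> a m + a n"
  shows "a (q * m + s) \<le> q * a m + a s"
proof (induction q)
  case (Suc q)
  have "a (Suc q * m + s) \<le> a m + a (q * m + s)"
    using sub[of m "q * m + s"] by (simp add: add.assoc)
  then show ?case using Suc by (simp add: algebra_simps)
qed simp

text \<open>Fekete's lemma. Writing n = q m + s with s < m, subadditivity bounds a n / n by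
  a m / m plus a term that vanishes as n grows.\<close>

lemma subadditive_ratio_convergent:
  fixes a :: "nat \<Rightarrow> real"
  assumes nonneg: "\<And>n. 0 \<le> a n" and sub: "\<And>m n. a (m + n) \<le> a m + a n"
  shows "convergent (\<lambda>n. a n / n)"
proof -
  define L where "L = (INF n\<in>{1..}. a n / n)"
  have bdd: "bdd_below ((\<lambda>n. a n / n) ` {1..})"
    by (rule bdd_belowI[of _ 0]) (auto simp: nonneg)
  have "(\<lambda>n. a n / n) \<longlonglongrightarrow> L"
  proof (rule metric_LIMSEQ_I)
    fix r :: real assume r: "r > 0"
    obtain m where m: "m \<ge> 1" "a m / m < L + r / 2"
      using cINF_less_iff[OF _ bdd, of "L + r / 2"] r by (auto simp: L_def)
    define C where "C = (\<Sum>j<m. a j)"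
    obtain N :: nat where N: "2 * C / r < N" using reals_Archimedean2 by blast
    have "dist (a n / n) L < r" if n: "n > N" for n
    proof -
      define q s where "q = n div m" and "s = n mod m"
      have n_eq: "n = q * m + s" and npos: "real n > 0" using n by (simp_all add: q_def s_def)
      have "s < m" using m by (simp add: s_def)
      then have "a s \<le> C" unfolding C_def by (intro member_le_sum) (auto simp: nonneg)
      moreover have "a n \<le> q * a m + a s" unfolding n_eq by (rule subadditive_iterate[where a = a, OF sub])
      ultimately have "a n / n \<le> q * a m / n + C / n"
        using npos by (simp add: divide_right_mono flip: add_divide_distrib)
      moreover have "q * a m / n \<le> a m / m"
      proof -
        have "q * a m = (q * m) * (a m / m)" using m by simp
        also have "\<dots> \<le> n * (a m / m)" using n_eq nonneg[of m] by (intro mult_right_mono) auto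
        finally show ?thesis using npos by (simp add: divide_le_eq mult.commute)
      qed
      moreover have "C / n < r / 2"
      proof -
        have "2 * C / r < n" using N n by (meson less_trans of_nat_less_iff)
        then show ?thesis using r npos by (simp add: field_simps)
      qed
      ultimately have "a n / n < L + r" using m(2) by linarith
      moreover have "L \<le> a n / n"
        unfolding L_def using n by (intro cINF_lower[OF bdd]) auto
      ultimately show ?thesis by (simp add: dist_real_def)
    qed
    then show "\<exists>N. \<forall>n\<ge>N. dist (a n / n) L < r" by (auto intro!: exI[of _ "Suc N"])
  qed
  then show ?thesis by (rule convergentI)
qed

lemma frac_domination_number_le_opt_rate:
  assumes g: "graph V E" and two: "card V \<ge> 2" and ex: "\<forall>k. \<exists>P. solves V E k P"
  shows "frac_domination_number V E \<le> opt_rate V E"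
proof -
  have "convergent (\<lambda>k. real (opt V E k) / k)"
    using opt_add_le[OF ex] by (intro subadditive_ratio_convergent) (simp_all flip: of_nat_add)
  then have lim: "(\<lambda>k. real (opt V E k) / k) \<longlonglongrightarrow> opt_rate V E"
    by (simp add: opt_rate_def convergent_LIMSEQ_iff)
  have "frac_domination_number V E \<le> opt V E k / k" if "k \<ge> 1" for k
  proof -
    obtain P where "solves V E k P" "cost P = opt V E k" by (rule opt_attained[OF ex])
    then show ?thesis
      using frac_domination_number_mult_le_cost[OF g two, of k P] that
      by (simp add: field_simps)
  qed
  then show ?thesis by (intro LIMSEQ_le_const[OF lim]) auto
qed

theorem corollary3p3:
  fixes V :: "'v set" and E :: "'v \<Rightarrow> 'v \<Rightarrow> bool"
  assumes "graph V E" and "connected_graph V E" and "card V \<ge> 2"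
  shows "\<exists>ss. distinct ss \<and> set ss \<subseteq> V \<and> (\<forall>k. solves V E k (simple_protocol ss k)) \<and>
           real (card (set ss)) \<le>
             2 * (real (domination_number V E) / frac_domination_number V E) * opt_rate V E"
proof -
  have ne: "V \<noteq> {}" using assms(3) by auto
  obtain D where D: "dominating V E D" "card D = domination_number V E"
    by (rule domination_number_attained[OF assms(1)])
  obtain S where S: "S \<subseteq> V" "nbhds_link V E S V" "card S \<le> 2 * card D"
    using nbhds_link_superset_of_dominating[OF assms(1,2) D(1) ne] by blast
  obtain ss where ss: "distinct ss" "set ss = S"
    using finite_distinct_list[OF finite_subset[OF S(1)]] assms(1) by (auto simp: graph_def)
  have sol: "\<forall>k. solves V E k (simple_protocol ss k)"
    using simple_protocol_solves S ss(2) by blast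
  define \<gamma> \<gamma>\<^sub>f where "\<gamma> = real (domination_number V E)" and "\<gamma>\<^sub>f = frac_domination_number V E"
  have "\<gamma>\<^sub>f \<ge> 1" unfolding \<gamma>\<^sub>f_def by (rule frac_domination_number_ge_1[OF assms(1) ne])
  have "\<gamma>\<^sub>f \<le> opt_rate V E"
    unfolding \<gamma>\<^sub>f_def using sol by (intro frac_domination_number_le_opt_rate[OF assms(1,3)]) blast
  have "real (card (set ss)) \<le> 2 * \<gamma>" using S(3) ss(2) D(2) by (simp add: \<gamma>_def)
  also have "\<dots> = 2 * (\<gamma> / \<gamma>\<^sub>f) * \<gamma>\<^sub>f" using \<open>\<gamma>\<^sub>f \<ge> 1\<close> by simp
  also have "\<dots> \<le> 2 * (\<gamma> / \<gamma>\<^sub>f) * opt_rate V E"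
    using \<open>\<gamma>\<^sub>f \<ge> 1\<close> \<open>\<gamma>\<^sub>f \<le> opt_rate V E\<close> by (intro mult_left_mono) (auto simp: \<gamma>_def)
  finally show ?thesis using ss S(1) sol by (auto simp: \<gamma>_def \<gamma>\<^sub>f_def)
qed

end
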